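(* For every closed de Bruijn term $t'$, every term $t$ and environment $e$, in the AB machine we have $\langle 0, \epsilon, (t, e)\rangle_{\mathrm{ind}} \xrightarrow{\mathrm{Seq}(t')} \langle t, (t', \varepsilon) :: e, []\rangle_{\mathrm{ev}}$, i.e., the machine performs successively the flagged transitions listed in $\mathrm{Seq}(t')$ and reaches that configuration.
   Context: De Bruijn terms $t,s ::= n \mid t\,s \mid \lambda.t$ ($n\in\mathbb N$); closures $\sigma ::= (t,e)$; environments $e ::= \sigma :: e \mid \varepsilon$; stacks $\pi ::= \sigma::\pi \mid []$; application stacks $\rho ::= (t,\kappa)::\rho \mid \epsilon$ with $\kappa\in\mathbb N$. A term is closed if it has no free de Bruijn indices. AB machine configurations: $\langle t, e, \pi\rangle_{\mathrm{ev}}$, $\langle n, \rho, \sigma\rangle_{\mathrm{ind}}$, $\langle t, \kappa, \rho, \sigma\rangle_{\mathrm{tm}}$. Transitions: $\langle t\,s, e, \pi\rangle_{\mathrm{ev}} \xrightarrow\tau \langle t, e, (s,e)::\pi\rangle_{\mathrm{ev}}$; $\langle 0, (t,e)::d, \pi\rangle_{\mathrm{ev}}\xrightarrow\tau\langle t,e,\pi\rangle_{\mathrm{ev}}$; $\langle n+1, (t,e)::d,\pi\rangle_{\mathrm{ev}} \xrightarrow\tau\langle n, d,\pi\rangle_{\mathrm{ev}}$; $\langle\lambda.t, e, \sigma::\pi\rangle_{\mathrm{ev}} \xrightarrow\tau \langle t, \sigma::e,\pi\rangle_{\mathrm{ev}}$; $\langle \lambda.t, e, []\rangle_{\mathrm{ev}}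 \xrightarrow{\mathsf{arg}} \langle 0, \epsilon, (t,e)\rangle_{\mathrm{ind}}$; $\langle n,\rho,\sigma\rangle_{\mathrm{ind}}\xrightarrow{\mathsf{suc}}\langle n+1,\rho,\sigma\rangle_{\mathrm{ind}}$; $\langle n,\rho,\sigma\rangle_{\mathrm{ind}}\xrightarrow{\mathsf{var}}\langle n, n+1,\rho,\sigma\rangle_{\mathrm{tm}}$; $\langle t,\kappa+1,\rho,\sigma\rangle_{\mathrm{tm}}\xrightarrow{\mathsf{lam}}\langle\lambda.t,\kappa,\rho,\sigma\rangle_{\mathrm{tm}}$; $\langle t,0,\rho,\sigma\rangle_{\mathrm{tm}}\xrightarrow{\mathsf{lam}}\langle\lambda.t,0,\rho,\sigma\rangle_{\mathrm{tm}}$; $\langle t,\kappa,\rho,\sigma\rangle_{\mathrm{tm}}\xrightarrow{\mathsf{appfun}}\langle 0, (t,\kappa)::\rho,\sigma\rangle_{\mathrm{ind}}$; $\langle s,\kappa_1,(t,\kappa_2)::\rho,\sigma\rangle_{\mathrm{tm}}\xrightarrow{\mathsf{app}}\langle t\,s,\max(\kappa_1,\kappa_2),\rho,\sigma\rangle_{\mathrm{tm}}$; $\langle t, 0, \epsilon, (s,e)\rangle_{\mathrm{tm}}\xrightarrow{\mathsf{done}}\langle s, (t,\varepsilon)::e, []\rangle_{\mathrm{ev}}$. Flag sequences (concatenation of sequences written by nesting): $\mathrm{Seq}(t) = (\mathrm{Seq}'(t), \mathsf{done})$; $\mathrm{Seq}'(t\,s) = (\mathrm{Seq}'(t), \mathsf{appfun},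 \mathrm{Seq}'(s), \mathsf{app})$; $\mathrm{Seq}'(\lambda.t) = (\mathrm{Seq}'(t), \mathsf{lam})$; $\mathrm{Seq}'(n) = (\mathrm{Seq}_{\mathrm{int}}(n), \mathsf{var})$; $\mathrm{Seq}_{\mathrm{int}}(0) = ()$; $\mathrm{Seq}_{\mathrm{int}}(n+1) = (\mathrm{Seq}_{\mathrm{int}}(n), \mathsf{suc})$. $C\xrightarrow{(F_1,\dots,F_m)}C'$ means $C\xrightarrow{F_1}\cdots\xrightarrow{F_m}C'$. *)

theory Defs
  imports Main
begin

datatype dbterm = Var nat | App dbterm dbterm | Lam dbterm

datatype clo = Clo dbterm "clo list"

type_synonym env = "clo list"
type_synonym stack = "clo list"
type_synonym appstack = "(dbterm \<times> nat) list"

datatype config =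
    Ev dbterm env stack
  | Ind nat appstack clo
  | Tm dbterm nat appstack clo

datatype flag = Tau | Arg | Suc_f | Var_f | Lam_f | Appfun | App_f | Done

inductive ab_step :: "config \<Rightarrow> flag \<Rightarrow> config \<Rightarrow> bool" where
  ev_app: "ab_step (Ev (App t s) e \<pi>) Tau (Ev t e (Clo s e # \<pi>))"
| ev_var0: "ab_step (Ev (Var 0) (Clo t e # d) \<pi>) Tau (Ev t e \<pi>)"
| ev_varS: "ab_step (Ev (Var (Suc n)) (Clo t e # d) \<pi>) Tau (Ev (Var n) d \<pi>)"
| ev_lam: "ab_step (Ev (Lam t) e (\<sigma> # \<pi>)) Tau (Ev t (\<sigma> # e) \<pi>)"
| ev_arg: "ab_step (Ev (Lam t) e []) Arg (Ind 0 [] (Clo t e))"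
| ind_suc: "ab_step (Ind n \<rho> \<sigma>) Suc_f (Ind (Suc n) \<rho> \<sigma>)"
| ind_var: "ab_step (Ind n \<rho> \<sigma>) Var_f (Tm (Var n) (Suc n) \<rho> \<sigma>)"
| tm_lamS: "ab_step (Tm t (Suc \<kappa>) \<rho> \<sigma>) Lam_f (Tm (Lam t) \<kappa> \<rho> \<sigma>)"
| tm_lam0: "ab_step (Tm t 0 \<rho> \<sigma>) Lam_f (Tm (Lam t) 0 \<rho> \<sigma>)"
| tm_appfun: "ab_step (Tm t \<kappa> \<rho> \<sigma>) Appfun (Ind 0 ((t, \<kappa>) # \<rho>) \<sigma>)"
| tm_app: "ab_step (Tm s \<kappa>1 ((t, \<kappa>2) # \<rho>) \<sigma>) App_f (Tm (App t s) (max \<kappa>1 \<kappa>2) \<rho> \<sigma>)"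
| tm_done: "ab_step (Tm t 0 [] (Clo s e)) Done (Ev s (Clo t [] # e) [])"

fun ab_steps :: "config \<Rightarrow> flag list \<Rightarrow> config \<Rightarrow> bool" where
  "ab_steps C [] C' = (C = C')"
| "ab_steps C (F # Fs) C' = (\<exists>C''. ab_step C F C'' \<and> ab_steps C'' Fs C')"

fun seq_int :: "nat \<Rightarrow> flag list" where
  "seq_int 0 = []"
| "seq_int (Suc n) = seq_int n @ [Suc_f]"

fun seq' :: "dbterm \<Rightarrow> flag list" where
  "seq' (App t s) = seq' t @ [Appfun] @ seq' s @ [App_f]"
| "seq' (Lam t) = seq' t @ [Lam_f]"
| "seq' (Var n) = seq_int n @ [Var_f]"

definition seq :: "dbterm \<Rightarrow> flag list" where
  "seq t = seq' t @ [Done]"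

fun closed_at :: "nat \<Rightarrow> dbterm \<Rightarrow> bool" where
  "closed_at k (Var n) = (n < k)"
| "closed_at k (App t s) = (closed_at k t \<and> closed_at k s)"
| "closed_at k (Lam t) = closed_at (Suc k) t"

definition closed :: "dbterm \<Rightarrow> bool" where
  "closed t = closed_at 0 t"

end

theory Submission
  imports Defs
begin

text \<open>Reading a term back from its flag sequence, the machine rebuilds the term bottom-up
  and keeps in the counter \<open>\<kappa>\<close> the least \<open>k\<close> for which the term built so far is
  closed at depth \<open>k\<close>. A closed term therefore ends with \<open>\<kappa> = 0\<close>, which is exactly
  when the final \<open>done\<close> transition applies.\<close>

fun free_bound :: "dbterm \<Rightarrow> nat" where
  "free_bound (Var n) = Suc n"
| "free_bound (App t s) = max (free_bound t) (free_bound s)"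
| "free_bound (Lam t) = free_bound t - 1"

lemma closed_at_iff_free_bound_le: "closed_at k t \<longleftrightarrow> free_bound t \<le> k"
  by (induction t arbitrary: k) (simp_all add: le_diff_conv Suc_le_eq)

lemma ab_steps_append:
  "ab_steps C xs C'' \<Longrightarrow> ab_steps C'' ys C' \<Longrightarrow> ab_steps C (xs @ ys) C'"
  by (induction xs arbitrary: C) auto

lemma ab_steps_snoc: "ab_steps C xs C'' \<Longrightarrow> ab_step C'' F C' \<Longrightarrow> ab_steps C (xs @ [F]) C'"
  by (auto intro: ab_steps_append)

lemma ab_steps_seq_int: "ab_steps (Ind 0 \<rho> \<sigma>) (seq_int n) (Ind n \<rho> \<sigma>)"
  by (induction n) (auto intro: ab_steps_snoc ab_step.ind_suc)

lemma ab_step_tm_lam: "ab_step (Tm t \<kappa> \<rho> \<sigma>) Lam_f (Tm (Lam t) (\<kappa> - 1) \<rho> \<sigma>)"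
  by (cases \<kappa>) (auto intro: ab_step.tm_lamS ab_step.tm_lam0)

lemma ab_steps_seq':
  "ab_steps (Ind 0 \<rho> \<sigma>) (seq' t) (Tm t (free_bound t) \<rho> \<sigma>)"
proof (induction t arbitrary: \<rho>)
  case (Var n)
  show ?case
    using ab_steps_snoc[OF ab_steps_seq_int ab_step.ind_var] by simp
next
  case (App t s)
  have fun_part: "ab_steps (Ind 0 \<rho> \<sigma>) (seq' t @ [Appfun]) (Ind 0 ((t, free_bound t) # \<rho>) \<sigma>)"
    using App.IH(1) ab_step.tm_appfun by (rule ab_steps_snoc)
  have "ab_step (Tm s (free_bound s) ((t, free_bound t) # \<rho>) \<sigma>) App_f
      (Tm (App t s) (free_bound (App t s)) \<rho> \<sigma>)"
    using ab_step.tm_app by (simp add: max.commute)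
  with App.IH(2) have arg_part: "ab_steps (Ind 0 ((t, free_bound t) # \<rho>) \<sigma>) (seq' s @ [App_f])
      (Tm (App t s) (free_bound (App t s)) \<rho> \<sigma>)"
    by (rule ab_steps_snoc)
  show ?case
    using ab_steps_append[OF fun_part arg_part] by simp
next
  case (Lam t)
  show ?case
    using ab_steps_snoc[OF Lam.IH ab_step_tm_lam] by simp
qed

theorem lemma5p5:
  fixes t' t :: dbterm and e :: env
  assumes "closed t'"
  shows "ab_steps (Ind 0 [] (Clo t e)) (seq t') (Ev t (Clo t' [] # e) [])"
proof -
  have "free_bound t' = 0"
    using assms by (simp add: closed_def closed_at_iff_free_bound_le)
  then have "ab_steps (Ind 0 [] (Clo t e)) (seq' t') (Tm t' 0 [] (Clo t e))"
    using ab_steps_seq' by metis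
  then show ?thesis
    unfolding seq_def using ab_step.tm_done by (rule ab_steps_snoc)
qed

end
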